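(* Let $R=(v_1,\dots,v_\ell)$ be a route and $\xi\in[N]$. For any vector $y^\xi\in\mathbb{Z}^{V_+}_{\ge0}$, we have $y^\xi\in\mathcal{Y}^\xi(\vec R)$ if and only if there exist $f\in\mathbb{R}^A_{\ge0}$ and $g\in\mathbb{R}^{V_+}_{\ge0}$ such that $f_{(v_{i-1},v_i)}+f_{(v_{i+1},v_i)}+d^\xi(v_i)=f_{(v_i,v_{i+1})}+f_{(v_i,v_{i-1})}+g_{v_i}$ for all $i\in[\ell]$; $f_{(v_{i-1},v_i)}\le C/2$ and $f_{(v_i,v_{i-1})}\le C/2$ for all $i\in[\ell+1]$; and $g_{v_i}\le C\,y^\xi_{v_i}$ for all $i\in[\ell]$. In particular, $\mathcal{Y}^\xi(\vec R)=\mathcal{Y}^\xi(\overleftarrow{R})$.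
   Context: $G=(V,E)$ complete undirected graph with $V=\{0\}\cup V_+$ ($0$ depot, $V_+$ customers); $D=(V,A)$ replaces each edge by two opposite arcs. Capacity $C\in\mathbb{Q}_{>0}$; scenarios $\xi\in[N]$ with demand vectors $d^\xi\in\mathbb{Q}^{V_+}_{\ge0}$, $d^\xi(v)\le C$. A route $R=(v_1,\dots,v_\ell)$ is the cycle $0,v_1,\dots,v_\ell,0$ through distinct customers; $v_0=v_{\ell+1}=0$. Its two directed versions are $\vec R=(v_1,\dots,v_\ell)$ (arcs $(0,v_1),(v_1,v_2),\dots,(v_\ell,0)$) and $\overleftarrow R=(v_\ell,\dots,v_1)$. For a directed route $(u_1,\dots,u_\ell)$ (with $u_0=u_{\ell+1}=0$) and scenario $\xi$, $\mathcal{Y}^\xi$ of it is the set of integer vectors $y^\xi\in\mathbb{Z}^{V_+}_{\ge0}$ for which there exist $f\in\mathbb{R}^A_{\ge0}$, $g\in\mathbb{R}^{V_+}_{\ge0}$ with $f_{(u_{i-1},u_i)}+d^\xi(u_i)=f_{(u_i,u_{i+1})}+g_{u_i}$ for $i\in[\ell]$, $f_{(u_{i-1},u_i)}\le C$ for $i\in[\ell+1]$, and $g_{u_i}\le Cy^\xi_{u_i}$ for $i\in[\ell]$. *)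

theory Defs
  imports Complex_Main
begin

(* Vertices have an arbitrary type 'v; the depot is 'dep', the customer set is Vp,
   V = insert dep Vp, and A = arcs of the complete digraph on V. *)

definition arcs :: "'v \<Rightarrow> 'v set \<Rightarrow> ('v \<times> 'v) set" where
  "arcs dep Vp = {(u, w). u \<in> insert dep Vp \<and> w \<in> insert dep Vp \<and> u \<noteq> w}"

definition is_route :: "'v \<Rightarrow> 'v set \<Rightarrow> 'v list \<Rightarrow> bool" where
  "is_route dep Vp R \<longleftrightarrow> distinct R \<and> set R \<subseteq> Vp"

(* padded node sequence: u_0 = u_{l+1} = depot, u_i = R!(i-1) for 1 \<le> i \<le> l *)
definition rnode :: "'v \<Rightarrow> 'v list \<Rightarrow> nat \<Rightarrow> 'v" where
  "rnode dep R i = (if i = 0 \<or> length R < i then dep else R ! (i - 1))"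

(* \<Y>^\<xi> of the directed route given by the list us (arcs (0,u_1),...,(u_l,0)),
   with capacity C and the scenario demand vector d *)
definition Yset :: "'v \<Rightarrow> 'v set \<Rightarrow> real \<Rightarrow> ('v \<Rightarrow> real) \<Rightarrow> 'v list \<Rightarrow> ('v \<Rightarrow> int) set" where
  "Yset dep Vp C d us = {y. (\<forall>v\<in>Vp. 0 \<le> y v) \<and>
     (\<exists>(f :: 'v \<times> 'v \<Rightarrow> real) (g :: 'v \<Rightarrow> real).
        (\<forall>a\<in>arcs dep Vp. 0 \<le> f a) \<and> (\<forall>v\<in>Vp. 0 \<le> g v) \<and>
        (\<forall>i\<in>{1..length us}.
            f (rnode dep us (i - 1), rnode dep us i) + d (rnode dep us i)
              = f (rnode dep us i, rnode dep us (i + 1)) + g (rnode dep us i)) \<and>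
        (\<forall>i\<in>{1..length us + 1}. f (rnode dep us (i - 1), rnode dep us i) \<le> C) \<and>
        (\<forall>i\<in>{1..length us}. g (rnode dep us i) \<le> C * of_int (y (rnode dep us i))))}"

end

theory Submission
  imports Defs
begin

text \<open>
  A one-way flow f of capacity C along the route and a pair of opposite flows F of capacity C/2
  carry the same information, namely the net flow on each edge of the cycle. Given f, put f/2 on
  each route arc and (C - f)/2 on its reverse: the net flow is f - C/2, so conservation at each
  customer is unchanged. Conversely F(a) - F(reverse a) + C/2 lies in [0, C] and is a one-way
  flow. The bidirected conditions do not depend on the orientation of the route, hence the sets
  for the two orientations coincide. When the route has a single customer its two arcs are each
  other's reverses, and F = f/2 is used instead.
\<close>

lemma rnode_0 [simp]: "rnode dep R 0 = dep"
  by (simp add: rnode_def)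

lemma rnode_rev: "rnode dep (rev R) i = rnode dep R (length R + 1 - i)"
  by (auto simp: rnode_def rev_nth)

lemma rnode_in_vertices: "set R \<subseteq> Vp \<Longrightarrow> rnode dep R i \<in> insert dep Vp"
  unfolding rnode_def by (auto intro!: subsetD[OF _ nth_mem])

lemma rnode_eq_iff:
  assumes "distinct R" "dep \<notin> set R" "i \<le> length R + 1" "j \<le> length R + 1"
  shows "rnode dep R i = rnode dep R j \<longleftrightarrow>
           i = j \<or> (i \<in> {0, length R + 1} \<and> j \<in> {0, length R + 1})"
  using assms nth_mem[of "i - 1" R] nth_mem[of "j - 1" R]
  by (auto simp: rnode_def nth_eq_iff_index_eq)

lemma route_arc_in_arcs:
  assumes "is_route dep Vp R" "dep \<notin> Vp" "R \<noteq> []" "i \<in> {1..length R + 1}"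
  shows "(rnode dep R (i - 1), rnode dep R i) \<in> arcs dep Vp"
    and "(rnode dep R i, rnode dep R (i - 1)) \<in> arcs dep Vp"
proof -
  have "distinct R" "set R \<subseteq> Vp" "dep \<notin> set R"
    using assms(1,2) by (auto simp: is_route_def)
  then have "rnode dep R (i - 1) \<noteq> rnode dep R i"
    using assms(3,4) by (auto simp: rnode_eq_iff)
  with \<open>set R \<subseteq> Vp\<close> show "(rnode dep R (i - 1), rnode dep R i) \<in> arcs dep Vp"
    and "(rnode dep R i, rnode dep R (i - 1)) \<in> arcs dep Vp"
    using rnode_in_vertices[of R Vp dep] by (auto simp: arcs_def)
qed

lemma reversed_route_arc_not_route_arc:
  assumes "distinct R" "dep \<notin> set R" "2 \<le> length R"
    and "i \<in> {1..length R + 1}" "j \<in> {1..length R + 1}"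
  shows "(rnode dep R i, rnode dep R (i - 1)) \<noteq> (rnode dep R (j - 1), rnode dep R j)"
  using assms by (auto simp: rnode_eq_iff)

definition route_flow ::
    "'v \<Rightarrow> 'v set \<Rightarrow> real \<Rightarrow> ('v \<Rightarrow> real) \<Rightarrow> 'v list \<Rightarrow> ('v \<Rightarrow> int)
      \<Rightarrow> ('v \<times> 'v \<Rightarrow> real) \<Rightarrow> ('v \<Rightarrow> real) \<Rightarrow> bool" where
  "route_flow dep Vp C d us y f g \<longleftrightarrow>
     (\<forall>a\<in>arcs dep Vp. 0 \<le> f a) \<and> (\<forall>v\<in>Vp. 0 \<le> g v) \<and>
     (\<forall>i\<in>{1..length us}.
        f (rnode dep us (i - 1), rnode dep us i) + d (rnode dep us i)
          = f (rnode dep us i, rnode dep us (i + 1)) + g (rnode dep us i)) \<and>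
     (\<forall>i\<in>{1..length us + 1}. f (rnode dep us (i - 1), rnode dep us i) \<le> C) \<and>
     (\<forall>i\<in>{1..length us}. g (rnode dep us i) \<le> C * of_int (y (rnode dep us i)))"

definition bidirected_route_flow ::
    "'v \<Rightarrow> 'v set \<Rightarrow> real \<Rightarrow> ('v \<Rightarrow> real) \<Rightarrow> 'v list \<Rightarrow> ('v \<Rightarrow> int)
      \<Rightarrow> ('v \<times> 'v \<Rightarrow> real) \<Rightarrow> ('v \<Rightarrow> real) \<Rightarrow> bool" where
  "bidirected_route_flow dep Vp C d R y f g \<longleftrightarrow>
     (\<forall>a\<in>arcs dep Vp. 0 \<le> f a) \<and> (\<forall>v\<in>Vp. 0 \<le> g v) \<and>
     (\<forall>i\<in>{1..length R}.
        f (rnode dep R (i - 1), rnode dep R i) + f (rnode dep R (i + 1), rnode dep R i)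
          + d (rnode dep R i)
        = f (rnode dep R i, rnode dep R (i + 1)) + f (rnode dep R i, rnode dep R (i - 1))
          + g (rnode dep R i)) \<and>
     (\<forall>i\<in>{1..length R + 1}.
        f (rnode dep R (i - 1), rnode dep R i) \<le> C / 2 \<and>
        f (rnode dep R i, rnode dep R (i - 1)) \<le> C / 2) \<and>
     (\<forall>i\<in>{1..length R}. g (rnode dep R i) \<le> C * of_int (y (rnode dep R i)))"

lemma Yset_eq_route_flow:
  "Yset dep Vp C d us = {y. (\<forall>v\<in>Vp. 0 \<le> y v) \<and> (\<exists>f g. route_flow dep Vp C d us y f g)}"
  unfolding Yset_def route_flow_def by simp

lemma bidirected_route_flow_of_short_route_flow:
  assumes "length R \<le> 1" "route_flow dep Vp C d R y f g"
  shows "bidirected_route_flow dep Vp C d R y (\<lambda>a. f a / 2) g"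
proof (cases R)
  case Nil
  with assms show ?thesis by (simp add: route_flow_def bidirected_route_flow_def rnode_def)
next
  case (Cons v R')
  with assms have "R = [v]" by simp
  moreover have "rnode dep [v] (Suc 0) = v" "rnode dep [v] (Suc (Suc 0)) = dep"
    "{Suc 0..Suc (Suc 0)} = {Suc 0, Suc (Suc 0)}"
    by (auto simp: rnode_def)
  ultimately show ?thesis
    using assms(2) by (simp add: route_flow_def bidirected_route_flow_def)
qed

lemma bidirected_route_flow_of_long_route_flow:
  assumes "is_route dep Vp R" "dep \<notin> Vp" "2 \<le> length R"
    and flow: "route_flow dep Vp C d R y f g"
  shows "\<exists>F. bidirected_route_flow dep Vp C d R y F g"
proof -
  let ?r = "rnode dep R"
  define RA where "RA = {(?r (i - 1), ?r i) | i. i \<in> {1..length R + 1}}"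
  define F where "F a = (if a \<in> RA then f a / 2
    else if prod.swap a \<in> RA then (C - f (prod.swap a)) / 2 else 0)" for a
  have route: "distinct R" "dep \<notin> set R"
    using assms(1,2) by (auto simp: is_route_def)
  have f_bounds: "0 \<le> f a \<and> f a \<le> C" if "a \<in> RA" for a
    using that flow route_arc_in_arcs(1)[OF assms(1,2)] assms(3)
    by (fastforce simp: RA_def route_flow_def)
  then have F_nonneg: "0 \<le> F a" for a
    by (auto simp: F_def)
  have F_forward: "F (?r (i - 1), ?r i) = f (?r (i - 1), ?r i) / 2"
    if "i \<in> {1..length R + 1}" for i
    using that by (auto simp: F_def RA_def)
  have F_backward: "F (?r i, ?r (i - 1)) = (C - f (?r (i - 1), ?r i)) / 2"
    if "i \<in> {1..length R + 1}" for i
    using that reversed_route_arc_not_route_arc[OF route assms(3)]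
    by (auto simp: F_def RA_def)
  have "bidirected_route_flow dep Vp C d R y F g"
    unfolding bidirected_route_flow_def
  proof (intro conjI ballI)
    fix i assume i: "i \<in> {1..length R}"
    have "f (?r (i - 1), ?r i) + d (?r i) = f (?r i, ?r (i + 1)) + g (?r i)"
      using flow i by (simp add: route_flow_def)
    then show "F (?r (i - 1), ?r i) + F (?r (i + 1), ?r i) + d (?r i)
        = F (?r i, ?r (i + 1)) + F (?r i, ?r (i - 1)) + g (?r i)"
      using i F_forward[of i] F_forward[of "i + 1"] F_backward[of i] F_backward[of "i + 1"]
      by (simp add: field_simps)
  next
    fix i assume "i \<in> {1..length R + 1}"
    then show "F (?r (i - 1), ?r i) \<le> C / 2" "F (?r i, ?r (i - 1)) \<le> C / 2"
      using F_forward[of i] F_backward[of i] f_bounds[of "(?r (i - 1), ?r i)"]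
      by (auto simp: RA_def)
  qed (use flow F_nonneg in \<open>auto simp: route_flow_def\<close>)
  then show ?thesis by blast
qed

lemma route_flow_of_bidirected_route_flow:
  assumes "is_route dep Vp R" "dep \<notin> Vp" "0 \<le> C"
    and flow: "bidirected_route_flow dep Vp C d R y F g"
  shows "route_flow dep Vp C d R y (\<lambda>a. max 0 (min C (F a - F (prod.swap a) + C / 2))) g"
    (is "route_flow _ _ _ _ _ _ ?f _")
proof -
  \<comment> \<open>the clamping only matters on arcs off the route, where F is unconstrained\<close>
  let ?r = "rnode dep R"
  have net_flow: "?f (?r (i - 1), ?r i) = F (?r (i - 1), ?r i) - F (?r i, ?r (i - 1)) + C / 2"
    if "R \<noteq> []" "i \<in> {1..length R + 1}" for i
  proof -
    have "0 \<le> F (?r (i - 1), ?r i)" "0 \<le> F (?r i, ?r (i - 1))"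
      using flow route_arc_in_arcs[OF assms(1,2) that] by (auto simp: bidirected_route_flow_def)
    moreover have "F (?r (i - 1), ?r i) \<le> C / 2" "F (?r i, ?r (i - 1)) \<le> C / 2"
      using flow that(2) by (auto simp: bidirected_route_flow_def)
    ultimately show ?thesis by simp
  qed
  show ?thesis
    unfolding route_flow_def
  proof (intro conjI ballI)
    fix i assume i: "i \<in> {1..length R}"
    then have "R \<noteq> []" by auto
    have "F (?r (i - 1), ?r i) + F (?r (i + 1), ?r i) + d (?r i)
        = F (?r i, ?r (i + 1)) + F (?r i, ?r (i - 1)) + g (?r i)"
      using flow i by (simp add: bidirected_route_flow_def)
    then show "?f (?r (i - 1), ?r i) + d (?r i) = ?f (?r i, ?r (i + 1)) + g (?r i)"
      using i net_flow[OF \<open>R \<noteq> []\<close>, of i] net_flow[OF \<open>R \<noteq> []\<close>, of "i + 1"] by simp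
  qed (use flow assms(3) in \<open>auto simp: bidirected_route_flow_def\<close>)
qed

lemma bidirected_route_flow_rev:
  assumes flow: "bidirected_route_flow dep Vp C d R y F g"
  shows "bidirected_route_flow dep Vp C d (rev R) y F g"
  unfolding bidirected_route_flow_def length_rev rnode_rev
proof (intro conjI ballI)
  let ?r = "rnode dep R" and ?n = "length R"
  fix i assume i: "i \<in> {1..?n}"
  define j where "j = ?n + 1 - i"
  have j: "j \<in> {1..?n}" "?n + 1 - i = j" "?n + 1 - (i - 1) = j + 1" "?n + 1 - (i + 1) = j - 1"
    using i by (auto simp: j_def)
  have "F (?r (j - 1), ?r j) + F (?r (j + 1), ?r j) + d (?r j)
      = F (?r j, ?r (j + 1)) + F (?r j, ?r (j - 1)) + g (?r j)"
    using flow j(1) by (simp add: bidirected_route_flow_def)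
  then show "F (?r (?n + 1 - (i - 1)), ?r (?n + 1 - i)) + F (?r (?n + 1 - (i + 1)), ?r (?n + 1 - i))
      + d (?r (?n + 1 - i))
    = F (?r (?n + 1 - i), ?r (?n + 1 - (i + 1))) + F (?r (?n + 1 - i), ?r (?n + 1 - (i - 1)))
      + g (?r (?n + 1 - i))"
    unfolding j(2-4) by linarith
next
  let ?r = "rnode dep R" and ?n = "length R"
  fix i assume i: "i \<in> {1..?n + 1}"
  define j where "j = ?n + 2 - i"
  have j: "j \<in> {1..?n + 1}" "?n + 1 - (i - 1) = j" "?n + 1 - i = j - 1"
    using i by (auto simp: j_def)
  then show "F (?r (?n + 1 - (i - 1)), ?r (?n + 1 - i)) \<le> C / 2"
    and "F (?r (?n + 1 - i), ?r (?n + 1 - (i - 1))) \<le> C / 2"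
    using flow by (auto simp: bidirected_route_flow_def)
next
  fix i assume "i \<in> {1..length R}"
  then have "length R + 1 - i \<in> {1..length R}" by auto
  then show "g (rnode dep R (length R + 1 - i)) \<le> C * of_int (y (rnode dep R (length R + 1 - i)))"
    using flow by (simp add: bidirected_route_flow_def)
qed (use flow in \<open>simp_all add: bidirected_route_flow_def\<close>)

lemma mem_Yset_iff_bidirected_route_flow:
  assumes "is_route dep Vp R" "dep \<notin> Vp" "0 \<le> C" "\<forall>v\<in>Vp. 0 \<le> y v"
  shows "y \<in> Yset dep Vp C d R \<longleftrightarrow> (\<exists>F g. bidirected_route_flow dep Vp C d R y F g)"
proof -
  have "(\<exists>f g. route_flow dep Vp C d R y f g) \<longleftrightarrow> (\<exists>F g. bidirected_route_flow dep Vp C d R y F g)"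
  proof
    assume "\<exists>f g. route_flow dep Vp C d R y f g"
    then obtain f g where flow: "route_flow dep Vp C d R y f g" by blast
    show "\<exists>F g. bidirected_route_flow dep Vp C d R y F g"
    proof (cases "length R \<le> 1")
      case True
      with flow show ?thesis by (blast dest: bidirected_route_flow_of_short_route_flow)
    next
      case False
      then have "2 \<le> length R" by simp
      with flow show ?thesis using bidirected_route_flow_of_long_route_flow[OF assms(1,2)] by blast
    qed
  next
    assume "\<exists>F g. bidirected_route_flow dep Vp C d R y F g"
    then show "\<exists>f g. route_flow dep Vp C d R y f g"
      using route_flow_of_bidirected_route_flow[OF assms(1-3)] by blast
  qed
  with assms(4) show ?thesis by (simp add: Yset_eq_route_flow)
qed

lemma Yset_rev:
  assumes "is_route dep Vp R" "dep \<notin> Vp" "0 \<le> C"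
  shows "Yset dep Vp C d (rev R) = Yset dep Vp C d R"
proof -
  have rev_route: "is_route dep Vp (rev R)"
    using assms(1) by (simp add: is_route_def)
  show ?thesis
  proof (rule set_eqI)
    fix y
    show "y \<in> Yset dep Vp C d (rev R) \<longleftrightarrow> y \<in> Yset dep Vp C d R"
    proof (cases "\<forall>v\<in>Vp. 0 \<le> y v")
      case True
      then show ?thesis
        using mem_Yset_iff_bidirected_route_flow[OF assms(1,2,3) True]
          mem_Yset_iff_bidirected_route_flow[OF rev_route assms(2,3) True]
          bidirected_route_flow_rev[of dep Vp C d R y]
          bidirected_route_flow_rev[of dep Vp C d "rev R" y, unfolded rev_rev_ident]
        by blast
    qed (auto simp: Yset_eq_route_flow)
  qed
qed

theorem lemma1:
  fixes dep :: 'v and Vp :: "'v set" and C :: real and N :: nat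
    and d :: "nat \<Rightarrow> 'v \<Rightarrow> real" and R :: "'v list" and \<xi> :: nat
  assumes "finite Vp" and "dep \<notin> Vp"
    and "C \<in> \<rat>" and "0 < C"
    and "\<And>\<xi>' v. \<xi>' \<in> {1..N} \<Longrightarrow> v \<in> Vp \<Longrightarrow> d \<xi>' v \<in> \<rat> \<and> 0 \<le> d \<xi>' v \<and> d \<xi>' v \<le> C"
    and "is_route dep Vp R"
    and "\<xi> \<in> {1..N}"
  shows "(\<forall>y :: 'v \<Rightarrow> int. (\<forall>v\<in>Vp. 0 \<le> y v) \<longrightarrow>
           (y \<in> Yset dep Vp C (d \<xi>) R \<longleftrightarrow>
            (\<exists>(f :: 'v \<times> 'v \<Rightarrow> real) (g :: 'v \<Rightarrow> real).
               (\<forall>a\<in>arcs dep Vp. 0 \<le> f a) \<and> (\<forall>v\<in>Vp. 0 \<le> g v) \<and>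
               (\<forall>i\<in>{1..length R}.
                  f (rnode dep R (i - 1), rnode dep R i) + f (rnode dep R (i + 1), rnode dep R i)
                    + d \<xi> (rnode dep R i)
                  = f (rnode dep R i, rnode dep R (i + 1)) + f (rnode dep R i, rnode dep R (i - 1))
                    + g (rnode dep R i)) \<and>
               (\<forall>i\<in>{1..length R + 1}.
                  f (rnode dep R (i - 1), rnode dep R i) \<le> C / 2 \<and>
                  f (rnode dep R i, rnode dep R (i - 1)) \<le> C / 2) \<and>
               (\<forall>i\<in>{1..length R}. g (rnode dep R i) \<le> C * of_int (y (rnode dep R i))))))
         \<and> Yset dep Vp C (d \<xi>) R = Yset dep Vp C (d \<xi>) (rev R)"
proof -
  have "0 \<le> C" using \<open>0 < C\<close> by simp
  with assms(2,6) show ?thesis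
    using mem_Yset_iff_bidirected_route_flow[of dep Vp R C _ "d \<xi>"] Yset_rev[of dep Vp R C "d \<xi>"]
    unfolding bidirected_route_flow_def by auto
qed

end
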